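(* Under the hypotheses and notation of the main entropy theorem (symmetric parameters $q_0=q_1=\sqrt{1-Q}$, $W=(I_{A_1}\otimes V)\mathbf{Rw}$ with the stated norm conditions on $\ket{e_i},\ket{f_i}$), let $\ket{\Phi^\pm}=\tfrac1{\sqrt2}(\ket{00}\pm\ket{11})$, $\tau=W\ket{\Phi^+}\bra{\Phi^+}W^*$, $\mu=W\ket{\Phi^-}\bra{\Phi^-}W^*$, and $\sigma=\tfrac12W(\ket{00}\bra{00}+\ket{11}\bra{11})W^*$. Then \[ \sigma_{A_1^ZE}=\tfrac12\tau_{A_1^ZE}+\tfrac12\mu_{A_1^ZE} \qquad\text{and}\qquad \tfrac12\big\|\tau_{A_1^ZE}-\mu_{A_1^ZE}\big\|_1\le 4Q(1-Q). \]
   Context: Setting: $\mathcal{H}_{A_1}=\mathcal{H}_{A_2}=\mathbb{C}^2$, finite-dimensional $\mathcal{H}_E$ with orthonormal $\ket0_E,\ket1_E$; $\eta\in\mathbb{C}$, $|\eta|\le1$, $\ket{e}=\eta\ket0_E+\sqrt{1-|\eta|^2}\ket1_E$, $\ket{f}=-\overline\eta\ket0_E+\sqrt{1-|\eta|^2}\ket1_E$; $\mathbf{Rw}\ket{00}=\sqrt{1-Q}\ket{000}+\sqrt{Q}\ket{1}\ket0\ket f$, $\mathbf{Rw}\ket{11}=\sqrt Q\ket0\ket1\ket e+\sqrt{1-Q}\ket{110}$ (order $A_1A_2E$); $V$ unitary on $\mathcal{H}_{A_2}\otimes\mathcal{H}_E$ with $V\ket0\ket0_E=\ket0\ket{e_0}+\ket1\ket{e_1}$,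 $V\ket1\ket0_E=\ket0\ket{e_2}+\ket1\ket{e_3}$, $V\ket0\ket f=\ket0\ket{f_0}+\ket1\ket{f_1}$, $V\ket1\ket e=\ket0\ket{f_2}+\ket1\ket{f_3}$, and assumed $\|e_0\|^2=\|e_3\|^2=\|f_0\|^2=\|f_3\|^2=1-Q$, $\|e_1\|^2=\|e_2\|^2=\|f_1\|^2=\|f_2\|^2=Q$. For a state $\rho$ on $A_1A_2E$, $\rho_{A_1^ZE}=\sum_{a}\ket a\bra a\otimes\mathrm{tr}_{A_1A_2}[(\ket a\bra a_{A_1}\otimes I)\rho]$. $\|\cdot\|_1$ is the trace norm. *)

theory Defs
  imports "HOL-Analysis.Analysis"
begin

text \<open>Finite-dimensional Hilbert spaces are modelled as complex^'i for a finite index type 'i;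
  linear maps as matrices complex^'cols^'rows (entry A $ row $ col).
  Qubits use the index type 2 with computational basis ket 0, ket 1.
  Tensor index order is A1 x (A2 x E).\<close>

definition ket :: "'i::finite \<Rightarrow> complex^'i" where
  "ket a = (\<chi> j. if j = a then 1 else 0)"

definition cinner :: "complex^'i::finite \<Rightarrow> complex^'i \<Rightarrow> complex" where
  "cinner u v = (\<Sum>i\<in>UNIV. cnj (u $ i) * v $ i)"

definition tensv :: "complex^'i::finite \<Rightarrow> complex^'j::finite \<Rightarrow> complex^('i \<times> 'j)" where
  "tensv u v = (\<chi> p. u $ fst p * v $ snd p)"

definition kron :: "complex^'m^'n \<Rightarrow> complex^'p^'q \<Rightarrow> complex^('m \<times> 'p)^('n \<times> 'q)" where
  "kron A B = (\<chi> r c. A $ fst r $ fst c * B $ snd r $ snd c)"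

definition adj :: "complex^'m^'n \<Rightarrow> complex^'n^'m" where
  "adj A = (\<chi> i j. cnj (A $ j $ i))"

definition outer :: "complex^'n \<Rightarrow> complex^'m \<Rightarrow> complex^'m^'n" where
  "outer u v = (\<chi> i j. u $ i * cnj (v $ j))"

definition unitary_mat :: "complex^'n^'n \<Rightarrow> bool" where
  "unitary_mat U \<longleftrightarrow> adj U ** U = mat 1 \<and> U ** adj U = mat 1"

definition psd :: "complex^'n::finite^'n \<Rightarrow> bool" where
  "psd A \<longleftrightarrow> adj A = A \<and> (\<forall>v. 0 \<le> Re (cinner v (A *v v)))"

definition trace_norm :: "complex^'n::finite^'n \<Rightarrow> real" where
  "trace_norm X = Re (trace (THE S. psd S \<and> S ** S = adj X ** X))"

definition ptrace12 :: "complex^('a::finite \<times> 'b::finite \<times> 'e::finite)^('a \<times> 'b \<times> 'e) \<Rightarrow> complex^'e^'e" where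
  "ptrace12 \<rho> = (\<chi> x x'. \<Sum>a\<in>UNIV. \<Sum>b\<in>UNIV. \<rho> $ (a, b, x) $ (a, b, x'))"

definition cqA1E :: "complex^('a::finite \<times> 'b::finite \<times> 'e::finite)^('a \<times> 'b \<times> 'e) \<Rightarrow> complex^('a \<times> 'e)^('a \<times> 'e)" where
  "cqA1E \<rho> = (\<Sum>a\<in>UNIV. kron (outer (ket a) (ket a))
        (ptrace12 (kron (outer (ket a) (ket a)) (mat 1 :: complex^('b \<times> 'e)^('b \<times> 'e)) ** \<rho>)))"

end

theory Submission
  imports Defs
begin

text \<open>Write \<open>x = W|00\<rangle>\<close> and \<open>y = W|11\<rangle>\<close>. Then \<open>\<tau>\<close> and \<open>\<mu>\<close> are \<open>(x \<plusminus> y)(x \<plusminus> y)\<^sup>*/2\<close>, so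
  \<open>\<sigma>\<close> is their average and \<open>\<tau> - \<mu> = xy\<^sup>* + yx\<^sup>*\<close>, and the classical-quantum reduction is
  linear. The reduction of \<open>xy\<^sup>* + yx\<^sup>*\<close> is \<open>\<Sum>\<^sub>a\<^sub>b (s\<^sub>a\<^sub>b t\<^sub>a\<^sub>b\<^sup>* + t\<^sub>a\<^sub>b s\<^sub>a\<^sub>b\<^sup>*)\<close> with
  \<open>s\<^sub>a\<^sub>b = |a\<rangle> \<otimes> x\<^sub>a\<^sub>b\<close> and \<open>t\<^sub>a\<^sub>b = |a\<rangle> \<otimes> y\<^sub>a\<^sub>b\<close>, where \<open>x\<^sub>a\<^sub>b\<close> is the \<open>E\<close>-component of \<open>x\<close>
  at \<open>|ab\<rangle>\<close>. Diagonalising such a Hermitian operator and applying the triangle inequality,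
  Cauchy-Schwarz and Bessel's inequality in its eigenbasis bounds its trace norm by
  \<open>\<Sum> 2\<parallel>s\<^sub>a\<^sub>b\<parallel>\<parallel>t\<^sub>a\<^sub>b\<parallel>\<close>. Each \<open>x\<^sub>a\<^sub>b\<close>, \<open>y\<^sub>a\<^sub>b\<close> is \<open>\<surd>Q\<close> or \<open>\<surd>(1-Q)\<close> times one of the vectors
  \<open>e\<^sub>i\<close>, \<open>f\<^sub>i\<close>, and the norm hypotheses make every product \<open>\<parallel>x\<^sub>a\<^sub>b\<parallel>\<parallel>y\<^sub>a\<^sub>b\<parallel>\<close> equal to
  \<open>Q(1-Q)\<close>; the four pairs \<open>(a,b)\<close> give \<open>\<parallel>\<tau> - \<mu>\<parallel>\<^sub>1 \<le> 8Q(1-Q)\<close>.\<close>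

section \<open>Inner product, adjoint and outer products\<close>

lemma cinner_add_right: "cinner u (v + w) = cinner u v + cinner u w"
  by (simp add: cinner_def sum.distrib algebra_simps)

lemma cinner_diff_right: "cinner u (v - w) = cinner u v - cinner u w"
  by (simp add: cinner_def sum_subtractf algebra_simps)

lemma cinner_diff_left: "cinner (u - v) w = cinner u w - cinner v w"
  by (simp add: cinner_def sum_subtractf algebra_simps)

lemma cinner_scale_right: "cinner u (c *s v) = c * cinner u v"
  by (simp add: cinner_def sum_distrib_left algebra_simps)

lemma scaleR_complex: "r *\<^sub>R (z :: complex) = complex_of_real r * z"
  by (rule scaleR_conv_of_real)

lemma cinner_scaleR_right: "cinner u (r *\<^sub>R v) = complex_of_real r * cinner u v"
  unfolding cinner_def sum_distrib_left vector_scaleR_component scaleR_complex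
  by (simp add: mult.left_commute)

lemma cinner_scaleR_left: "cinner (r *\<^sub>R u) v = complex_of_real r * cinner u v"
  unfolding cinner_def sum_distrib_left vector_scaleR_component scaleR_complex
  by (simp add: mult.assoc)

lemma cinner_zero_right [simp]: "cinner u 0 = 0"
  by (simp add: cinner_def)

lemma cinner_sum_right: "cinner u (sum f A) = (\<Sum>a\<in>A. cinner u (f a))"
  by (induction A rule: infinite_finite_induct) (simp_all add: cinner_add_right)

lemma cnj_cinner: "cnj (cinner u v) = cinner v u"
  by (simp add: cinner_def mult.commute)

lemma cmod_cinner_commute: "cmod (cinner v u) = cmod (cinner u v)"
  by (metis cnj_cinner complex_mod_cnj)

lemma cinner_self: "cinner u u = complex_of_real ((norm u)\<^sup>2)"
proof -
  have "(\<Sum>i\<in>UNIV. (cmod (u $ i))\<^sup>2) = (norm u)\<^sup>2"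
    unfolding norm_vec_def L2_set_def by (simp add: sum_nonneg)
  moreover have "cinner u u = (\<Sum>i\<in>UNIV. complex_of_real ((cmod (u $ i))\<^sup>2))"
    unfolding cinner_def by (intro sum.cong refl) (metis complex_norm_square mult.commute)
  ultimately show ?thesis by (metis of_real_sum)
qed

lemma cinner_adj: "cinner u (A *v v) = cinner (adj A *v u) v"
proof -
  have "cinner u (A *v v) = (\<Sum>i\<in>UNIV. \<Sum>j\<in>UNIV. cnj (u $ i) * A $ i $ j * v $ j)"
    by (simp add: cinner_def matrix_vector_mult_def sum_distrib_left mult.assoc)
  also have "\<dots> = (\<Sum>j\<in>UNIV. \<Sum>i\<in>UNIV. cnj (u $ i) * A $ i $ j * v $ j)"
    by (rule sum.swap)
  also have "\<dots> = cinner (adj A *v u) v"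
    by (simp add: cinner_def matrix_vector_mult_def adj_def sum_distrib_left mult_ac)
  finally show ?thesis .
qed

lemma scaleR_vec_complex: "r *\<^sub>R (x :: complex^'n) = complex_of_real r *s x"
  by (simp add: vec_eq_iff scaleR_complex)

lemma norm_of_real_smult: "norm (complex_of_real r *s (x :: complex^'n)) = \<bar>r\<bar> * norm x"
  by (simp flip: scaleR_vec_complex)

lemma scaleR_matrix_vector_mult: "(r *\<^sub>R (A :: complex^'n^'m)) *v x = r *\<^sub>R (A *v x)"
  by (simp add: vec_eq_iff matrix_vector_mult_def scaleR_sum_right)

lemma matrix_vector_mult_scaleR_complex: "(A :: complex^'n^'m) *v (r *\<^sub>R x) = r *\<^sub>R (A *v x)"
  by (simp add: scaleR_vec_complex vector_scalar_commute)

lemma sum_matrix_vector_mult: "sum f S *v (x :: complex^'n) = (\<Sum>a\<in>S. f a *v x)"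
  by (induction S rule: infinite_finite_induct) (simp_all add: matrix_vector_mult_add_rdistrib)

lemma matrix_vector_mult_sum: "(A :: complex^'n^'m) *v sum f S = (\<Sum>a\<in>S. A *v f a)"
  by (induction S rule: infinite_finite_induct) (simp_all add: matrix_vector_right_distrib)

lemma uminus_matrix_vector_mult: "(- (A :: complex^'n^'m)) *v x = - (A *v x)"
  by (simp add: vec_eq_iff matrix_vector_mult_def sum_negf)

lemma adj_adj [simp]: "adj (adj A) = A"
  by (simp add: adj_def vec_eq_iff)

lemma adj_add: "adj (A + B) = adj A + adj B"
  by (simp add: adj_def vec_eq_iff)

lemma adj_diff: "adj (A - B) = adj A - adj B"
  by (simp add: adj_def vec_eq_iff)

lemma adj_scaleR: "adj (r *\<^sub>R A) = r *\<^sub>R adj A"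
  by (simp add: adj_def vec_eq_iff)

lemma adj_uminus: "adj (- A) = - adj A"
  by (simp add: adj_def vec_eq_iff)

lemma adj_outer: "adj (outer u v) = outer v u"
  by (simp add: adj_def outer_def vec_eq_iff)

lemma adj_sum: "adj (sum f A) = (\<Sum>a\<in>A. adj (f a))"
  by (induction A rule: infinite_finite_induct) (auto simp: adj_def vec_eq_iff)

lemma adj_mat_1: "adj (mat 1 :: complex^'n^'n) = mat 1"
  by (simp add: adj_def mat_def vec_eq_iff)

lemma outer_nth: "outer u v $ i $ j = u $ i * cnj (v $ j)"
  by (simp add: outer_def)

lemma outer_matrix_vector_mult: "outer u v *v w = cinner v w *s u"
  by (simp add: outer_def matrix_vector_mult_def cinner_def vec_eq_iff sum_distrib_left
      mult.commute mult.left_commute)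

lemma outer_add_left: "outer (u + v) w = outer u w + outer v w"
  by (simp add: vec_eq_iff outer_nth distrib_right)

lemma outer_add_right: "outer w (u + v) = outer w u + outer w v"
  by (simp add: vec_eq_iff outer_nth distrib_left)

lemma outer_diff_left: "outer (u - v) w = outer u w - outer v w"
  by (simp add: vec_eq_iff outer_nth left_diff_distrib)

lemma outer_diff_right: "outer w (u - v) = outer w u - outer w v"
  by (simp add: vec_eq_iff outer_nth right_diff_distrib)

lemma outer_of_real_scale:
  "outer (complex_of_real r *s u) (complex_of_real r *s v) = (r * r) *\<^sub>R outer u v"
  by (simp add: vec_eq_iff outer_nth scaleR_complex mult_ac)

lemma matrix_add_rdistrib: "(B + C) ** (A :: complex^'p^'n) = B ** A + C ** A"
  by (simp add: matrix_matrix_mult_def vec_eq_iff distrib_right sum.distrib)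

lemma sandwich_outer: "(A :: complex^'n^'m) ** outer u v ** adj B = outer (A *v u) (B *v v)"
proof -
  have "(A ** outer u v ** adj B) *v x = outer (A *v u) (B *v v) *v x" for x
  proof -
    have "(A ** outer u v ** adj B) *v x = cinner v (adj B *v x) *s (A *v u)"
      by (simp add: matrix_vector_mul_assoc[symmetric] matrix_mul_assoc[symmetric]
          outer_matrix_vector_mult vector_scalar_commute)
    also have "cinner v (adj B *v x) = cinner (B *v v) x"
      by (simp only: cinner_adj[of v "adj B" x] adj_adj)
    finally show ?thesis by (simp add: outer_matrix_vector_mult)
  qed
  then show ?thesis by (simp add: matrix_eq)
qed


section \<open>The spectral theorem for Hermitian matrices\<close>

definition quad_form :: "complex^'n^'n \<Rightarrow> complex^'n \<Rightarrow> real" where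
  "quad_form X v = Re (cinner v (X *v v))"

definition orthonormal_set :: "(complex^'n) set \<Rightarrow> bool" where
  "orthonormal_set F \<longleftrightarrow>
     (\<forall>w\<in>F. cinner w w = 1) \<and> (\<forall>w\<in>F. \<forall>u\<in>F. w \<noteq> u \<longrightarrow> cinner w u = 0)"

definition diag_op :: "(complex^'n) set \<Rightarrow> (complex^'n \<Rightarrow> real) \<Rightarrow> complex^'n^'n" where
  "diag_op F c = (\<Sum>w\<in>F. c w *\<^sub>R outer w w)"

text \<open>A positive semidefinite form vanishing at \<open>v\<close> forces \<open>M v = 0\<close>: otherwise the form
  is negative at \<open>v - t M v\<close> for small \<open>t > 0\<close>.\<close>
lemma psd_quad_form_zero_imp_kernel:
  fixes M :: "complex^'n^'n"
  assumes M: "psd M" and z: "quad_form M v = 0"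
  shows "M *v v = 0"
proof (rule ccontr)
  assume nz: "M *v v \<noteq> 0"
  have h: "adj M = M" and pos: "\<And>u. 0 \<le> quad_form M u"
    using M by (auto simp: psd_def quad_form_def)
  define w where "w = M *v v"
  define a where "a = (norm w)\<^sup>2"
  define c where "c = quad_form M w"
  define t where "t = a / (c + 1)"
  have a: "a > 0" using nz by (simp add: a_def w_def)
  have c: "c \<ge> 0" using pos by (simp add: c_def)
  have t: "t > 0" using a c by (simp add: t_def)
  have e1: "cinner w w = complex_of_real a" by (simp add: a_def cinner_self)
  have e2: "cinner v (M *v w) = complex_of_real a"
    unfolding cinner_adj[of v M w] h w_def[symmetric] by (rule e1)
  have e3: "cinner w (M *v v) = complex_of_real a" using e1 by (simp add: w_def)
  have "quad_form M (v - t *\<^sub>R w) = quad_form M v - 2 * t * a + t\<^sup>2 * c"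
    by (simp add: quad_form_def matrix_vector_mult_diff_distrib matrix_vector_mult_scaleR_complex
        cinner_diff_left cinner_diff_right cinner_scaleR_left cinner_scaleR_right e2 e3 c_def
        power2_eq_square algebra_simps)
  also have "\<dots> < 0"
  proof -
    have "t * c < a" using a c by (simp add: t_def field_simps)
    then have "t * (t * c) < t * a" using t by simp
    then show ?thesis using z t a by (simp add: power2_eq_square algebra_simps)
  qed
  finally show False using pos[of "v - t *\<^sub>R w"] by simp
qed

lemma quad_form_scaleR: "quad_form X (r *\<^sub>R u) = r\<^sup>2 * quad_form X u"
  by (simp add: quad_form_def matrix_vector_mult_scaleR_complex cinner_scaleR_left
      cinner_scaleR_right power2_eq_square)

lemma continuous_on_quad_form: "continuous_on S (quad_form X)"
  unfolding quad_form_def cinner_def matrix_vector_mult_def by (intro continuous_intros)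

lemma quad_form_le_sphere_bound:
  assumes "\<And>y. norm y = 1 \<Longrightarrow> quad_form X y \<le> d"
  shows "quad_form X u \<le> d * (norm u)\<^sup>2"
proof (cases "u = 0")
  case True
  then show ?thesis by (simp add: quad_form_def)
next
  case False
  define y where "y = (1 / norm u) *\<^sub>R u"
  have "quad_form X y \<le> d" using False by (intro assms) (simp add: y_def)
  moreover have "u = norm u *\<^sub>R y" using False by (simp add: y_def)
  then have "quad_form X u = (norm u)\<^sup>2 * quad_form X y" by (metis quad_form_scaleR)
  ultimately show ?thesis by (simp add: mult_right_mono mult.commute)
qed

text \<open>The maximum \<open>d\<close> of the form on the unit sphere is an eigenvalue, because
  \<open>d I - X\<close> is positive semidefinite and its form vanishes at a maximiser.\<close>
lemma hermitian_pos_eigenvector: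
  fixes X :: "complex^'n^'n"
  assumes h: "adj X = X" and u: "quad_form X u > 0"
  shows "\<exists>v d. cinner v v = 1 \<and> d > 0 \<and> X *v v = d *\<^sub>R v"
proof -
  have "sphere (0 :: complex^'n) 1 \<noteq> {}" by (simp add: sphere_eq_empty)
  then obtain v where v0: "v \<in> sphere (0 :: complex^'n) 1"
    and max: "\<forall>y\<in>sphere 0 1. quad_form X y \<le> quad_form X v"
    using continuous_attains_sup[OF compact_sphere _ continuous_on_quad_form] by blast
  have v: "norm v = 1" using v0 by simp
  define d where "d = quad_form X v"
  have le: "quad_form X y \<le> d * (norm y)\<^sup>2" for y
    by (rule quad_form_le_sphere_bound) (simp add: max d_def)
  have "0 < d * (norm u)\<^sup>2" using u le[of u] by linarith
  then have "d > 0" by (simp add: zero_less_mult_iff)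
  define M where "M = d *\<^sub>R mat 1 - X"
  have Mv: "M *v y = d *\<^sub>R y - X *v y" for y
    by (simp add: M_def matrix_vector_mult_diff_rdistrib scaleR_matrix_vector_mult)
  have form_M: "quad_form M y = d * (norm y)\<^sup>2 - quad_form X y" for y
    by (simp add: quad_form_def Mv cinner_diff_right cinner_scaleR_right cinner_self)
  have "0 \<le> quad_form M y" for y using le[of y] by (simp add: form_M)
  then have "psd M"
    by (simp add: psd_def quad_form_def M_def adj_diff adj_scaleR adj_mat_1 h)
  moreover have "quad_form M v = 0" by (simp add: form_M v d_def)
  ultimately have "M *v v = 0" by (rule psd_quad_form_zero_imp_kernel)
  then have "X *v v = d *\<^sub>R v" by (simp add: Mv)
  moreover have "cinner v v = 1" by (simp add: cinner_self v)
  ultimately show ?thesis using \<open>d > 0\<close> by blast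
qed

lemma hermitian_nonzero_eigenvector:
  fixes X :: "complex^'n^'n"
  assumes h: "adj X = X" and nz: "X \<noteq> 0"
  shows "\<exists>v d. cinner v v = 1 \<and> d \<noteq> 0 \<and> X *v v = d *\<^sub>R v"
proof -
  have "\<exists>u. quad_form X u \<noteq> 0"
  proof (rule ccontr)
    assume "\<nexists>u. quad_form X u \<noteq> 0"
    then have "X *v u = 0" for u
      using h by (intro psd_quad_form_zero_imp_kernel) (auto simp: psd_def quad_form_def)
    with nz show False by (simp add: matrix_eq)
  qed
  then obtain u where u: "quad_form X u \<noteq> 0" by blast
  show ?thesis
  proof (cases "quad_form X u > 0")
    case True
    then obtain v d where "cinner v v = 1" "d > 0" "X *v v = d *\<^sub>R v"
      using hermitian_pos_eigenvector[OF h] by blast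
    then show ?thesis by (intro exI[of _ v] exI[of _ d]) simp
  next
    case False
    have "quad_form (- X) u = - quad_form X u"
      by (simp add: quad_form_def uminus_matrix_vector_mult cinner_def sum_negf)
    with u False have "quad_form (- X) u > 0" by simp
    moreover have "adj (- X) = - X" by (simp add: adj_uminus h)
    ultimately obtain v d where v: "cinner v v = 1" "d > 0" "(- X) *v v = d *\<^sub>R v"
      using hermitian_pos_eigenvector by blast
    have "X *v v = - ((- X) *v v)" by (simp add: uminus_matrix_vector_mult)
    also have "\<dots> = (- d) *\<^sub>R v" by (simp add: v(3))
    finally show ?thesis using v by (intro exI[of _ v] exI[of _ "- d"]) simp
  qed
qed

lemma hermitian_eigenvectors_orthogonal:
  assumes "adj X = X" "X *v v = a *\<^sub>R v" "X *v w = b *\<^sub>R w" "a \<noteq> b"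
  shows "cinner w v = 0"
proof -
  have "complex_of_real a * cinner w v = cinner w (X *v v)"
    by (simp add: assms(2) cinner_scaleR_right)
  also have "\<dots> = cinner (X *v w) v" by (simp only: cinner_adj[of w X v] assms(1))
  also have "\<dots> = complex_of_real b * cinner w v" by (simp add: assms(3) cinner_scaleR_left)
  finally show ?thesis using assms(4) by (auto simp: algebra_simps)
qed

lemma orthonormal_set_independent:
  assumes "orthonormal_set (F :: (complex^'n) set)"
  shows "independent F"
proof (rule pairwise_orthogonal_independent)
  have "x \<bullet> y = Re (cinner x y)" for x y :: "complex^'n"
    by (simp add: inner_vec_def cinner_def inner_complex_def Re_sum)
  then show "pairwise orthogonal F"
    using assms by (auto simp: pairwise_def orthogonal_def orthonormal_set_def)
  show "0 \<notin> F" using assms by (auto simp: orthonormal_set_def)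
qed

lemma diag_op_apply: "diag_op F c *v x = (\<Sum>w\<in>F. (complex_of_real (c w) * cinner w x) *s w)"
  by (simp add: diag_op_def sum_matrix_vector_mult scaleR_matrix_vector_mult
      outer_matrix_vector_mult scaleR_vec_complex vector_smult_assoc)

lemma diag_op_eigenvector:
  assumes "orthonormal_set F" "finite F" "w \<in> F"
  shows "diag_op F c *v w = c w *\<^sub>R w"
proof -
  have "diag_op F c *v w = (\<Sum>u\<in>F. if u = w then c w *\<^sub>R w else 0)"
    unfolding diag_op_apply using assms(1,3)
    by (intro sum.cong refl) (auto simp: orthonormal_set_def scaleR_vec_complex)
  also have "\<dots> = c w *\<^sub>R w" using assms(2,3) by simp
  finally show ?thesis .
qed

lemma adj_diag_op: "adj (diag_op F c) = diag_op F c"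
  by (simp add: diag_op_def adj_sum adj_scaleR adj_outer)

text \<open>Induction on the codimension of an orthonormal family \<open>W\<close> inside the kernel of \<open>X\<close>:
  a nonzero eigenvector \<open>v\<close> is orthogonal to \<open>W\<close>, and \<open>X - d vv\<^sup>*\<close> kills \<open>W \<union> {v}\<close>.\<close>
lemma hermitian_spectral_decomposition_aux:
  fixes X :: "complex^'n^'n"
  assumes "adj X = X" "orthonormal_set W" "\<And>w. w \<in> W \<Longrightarrow> X *v w = 0"
  shows "\<exists>F lam. finite F \<and> orthonormal_set F \<and> (\<forall>w\<in>F. lam w \<noteq> 0) \<and> X = diag_op F lam"
  using assms
proof (induction "DIM(complex^'n) - card W" arbitrary: X W rule: less_induct)
  case less
  show ?case
  proof (cases "X = 0")
    case True
    then show ?thesis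
      by (intro exI[of _ "{}"]) (simp add: orthonormal_set_def diag_op_def)
  next
    case False
    from hermitian_nonzero_eigenvector[OF less.prems(1) this] obtain v d
      where v1: "cinner v v = 1" and d: "d \<noteq> 0" and Xv: "X *v v = d *\<^sub>R v" by blast
    have vW: "cinner w v = 0" "cinner v w = 0" if "w \<in> W" for w
      using hermitian_eigenvectors_orthogonal[OF less.prems(1) Xv _ d, of w] less.prems(3)[OF that]
        cnj_cinner[of w v] by simp_all
    define X' where "X' = X - d *\<^sub>R outer v v"
    have X'_apply: "X' *v y = X *v y - (complex_of_real d * cinner v y) *s v" for y
      by (simp add: X'_def matrix_vector_mult_diff_rdistrib scaleR_matrix_vector_mult
          outer_matrix_vector_mult scaleR_vec_complex vector_smult_assoc)
    have W': "orthonormal_set (insert v W)"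
      using less.prems(2) v1 vW by (auto simp: orthonormal_set_def)
    have "finite W" "v \<notin> W"
      using orthonormal_set_independent[OF less.prems(2)] vW v1 by (auto simp: independent_bound)
    moreover have "card (insert v W) \<le> DIM(complex^'n)"
      using orthonormal_set_independent[OF W'] independent_bound by blast
    ultimately have "DIM(complex^'n) - card (insert v W) < DIM(complex^'n) - card W" by simp
    moreover have "adj X' = X'" by (simp add: X'_def adj_diff adj_scaleR adj_outer less.prems(1))
    moreover have kernel: "X' *v w = 0" if "w \<in> insert v W" for w
      using that less.prems(3) vW by (auto simp: X'_apply Xv v1 scaleR_vec_complex)
    ultimately obtain F lam where F: "finite F" "orthonormal_set F" "\<forall>w\<in>F. lam w \<noteq> 0"
      and X': "X' = diag_op F lam"
      using less.hyps W' by blast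
    have vF: "cinner v u = 0" "cinner u v = 0" if "u \<in> F" for u
    proof -
      have "diag_op F lam *v v = 0 *\<^sub>R v" using kernel X' by simp
      with F(3) that show "cinner v u = 0"
        by (intro hermitian_eigenvectors_orthogonal[OF adj_diag_op
              diag_op_eigenvector[OF F(2,1) that, of lam]]) auto
      then show "cinner u v = 0" using cnj_cinner[of u v] by simp
    qed
    then have "v \<notin> F" using v1 by force
    have "X = diag_op F lam + d *\<^sub>R outer v v" by (simp add: X' [symmetric] X'_def)
    also have "\<dots> = diag_op (insert v F) (lam(v := d))"
      using F(1) \<open>v \<notin> F\<close> by (auto simp: diag_op_def add.commute intro!: sum.cong)
    finally show ?thesis
      using F \<open>v \<notin> F\<close> v1 vF d
      by (intro exI[of _ "insert v F"] exI[of _ "lam(v := d)"]) (auto simp: orthonormal_set_def)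
  qed
qed

lemma hermitian_spectral_decomposition:
  fixes X :: "complex^'n^'n"
  assumes "adj X = X"
  shows "\<exists>F lam. finite F \<and> orthonormal_set F \<and> X = diag_op F lam"
  using hermitian_spectral_decomposition_aux[OF assms, of "{}"]
  by (auto simp: orthonormal_set_def)


section \<open>Trace norm of Hermitian matrices\<close>

lemma diag_op_mult:
  assumes o: "orthonormal_set F" and f: "finite F"
  shows "diag_op F a ** diag_op F b = diag_op F (\<lambda>w. a w * b w)"
proof -
  have "(diag_op F a ** diag_op F b) *v x = diag_op F (\<lambda>w. a w * b w) *v x" for x
  proof -
    have "(diag_op F a ** diag_op F b) *v x
        = (\<Sum>w\<in>F. (complex_of_real (b w) * cinner w x) *s (diag_op F a *v w))"
      by (simp add: matrix_vector_mul_assoc[symmetric] diag_op_apply matrix_vector_mult_sum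
          vector_scalar_commute)
    also have "\<dots> = (\<Sum>w\<in>F. (complex_of_real (b w) * cinner w x) *s (a w *\<^sub>R w))"
      by (intro sum.cong refl) (simp add: diag_op_eigenvector[OF o f])
    also have "\<dots> = diag_op F (\<lambda>w. a w * b w) *v x"
      by (simp add: diag_op_apply scaleR_vec_complex vector_smult_assoc mult_ac)
    finally show ?thesis .
  qed
  then show ?thesis by (simp add: matrix_eq)
qed

lemma quad_form_diag_op: "quad_form (diag_op F c) u = (\<Sum>w\<in>F. c w * (cmod (cinner w u))\<^sup>2)"
proof -
  have sq: "cinner w u * cinner u w = complex_of_real ((cmod (cinner w u))\<^sup>2)" for w
    by (metis complex_norm_square cnj_cinner)
  have "cinner u (diag_op F c *v u) = (\<Sum>w\<in>F. complex_of_real (c w) * (cinner w u * cinner u w))"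
    by (simp add: diag_op_apply cinner_sum_right cinner_scale_right mult_ac)
  also have "\<dots> = (\<Sum>w\<in>F. complex_of_real (c w * (cmod (cinner w u))\<^sup>2))"
    by (simp only: sq of_real_mult)
  finally show ?thesis by (simp only: quad_form_def Re_sum Re_complex_of_real)
qed

text \<open>Uniqueness of the positive square root: an eigenvector \<open>v\<close> of \<open>S - T\<close> with eigenvalue
  \<open>d \<noteq> 0\<close> satisfies \<open>d (\<langle>v, S v\<rangle> + \<langle>v, T v\<rangle>) = \<langle>v, (S\<^sup>2 - T\<^sup>2) v\<rangle> = 0\<close>, so both forms vanish at \<open>v\<close>.\<close>
lemma psd_sqrt_unique:
  fixes S T :: "complex^'n^'n"
  assumes S: "psd S" and T: "psd T" and eq: "S ** S = T ** T"
  shows "S = T"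
proof (rule ccontr)
  assume "S \<noteq> T"
  have hS: "adj S = S" and pS: "0 \<le> quad_form S u"
    and hT: "adj T = T" and pT: "0 \<le> quad_form T u" for u
    using S T by (auto simp: psd_def quad_form_def)
  define E where "E = S - T"
  have Eapp: "E *v y = S *v y - T *v y" for y
    by (simp add: E_def matrix_vector_mult_diff_rdistrib)
  have "adj E = E" by (simp add: E_def adj_diff hS hT)
  moreover have "E \<noteq> 0" using \<open>S \<noteq> T\<close> by (simp add: E_def)
  ultimately obtain v d where v1: "cinner v v = 1" and d: "d \<noteq> 0" and Ev: "E *v v = d *\<^sub>R v"
    using hermitian_nonzero_eigenvector by blast
  have "S *v (S *v v) = T *v (T *v v)" by (simp add: matrix_vector_mul_assoc eq)
  then have key: "S *v (E *v v) + E *v (T *v v) = 0"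
    by (simp add: Eapp matrix_vector_mult_diff_distrib)
  have "cinner v (E *v (T *v v)) = cinner (E *v v) (T *v v)"
    by (simp only: cinner_adj[of v E] \<open>adj E = E\<close>)
  then have "complex_of_real d * (cinner v (S *v v) + cinner v (T *v v)) = 0"
    using arg_cong[OF key, of "cinner v"]
    by (simp add: Ev matrix_vector_mult_scaleR_complex cinner_scaleR_right cinner_scaleR_left
        cinner_add_right distrib_left)
  then have "quad_form S v + quad_form T v = 0"
    using d by (simp add: quad_form_def) (metis plus_complex.sel(1) zero_complex.sel(1))
  then have "quad_form S v = 0" "quad_form T v = 0" using pS[of v] pT[of v] by linarith+
  then have "E *v v = 0"
    using psd_quad_form_zero_imp_kernel[OF S] psd_quad_form_zero_imp_kernel[OF T]
    by (simp add: Eapp)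
  then show False using Ev d v1 by simp
qed

lemma trace_diag_op: "trace (diag_op F c) = (\<Sum>w\<in>F. complex_of_real (c w) * cinner w w)"
proof -
  have "trace (diag_op F c) = (\<Sum>i\<in>UNIV. \<Sum>w\<in>F. complex_of_real (c w) * (w $ i * cnj (w $ i)))"
    by (simp add: trace_def diag_op_def outer_def scaleR_complex)
  also have "\<dots> = (\<Sum>w\<in>F. \<Sum>i\<in>UNIV. complex_of_real (c w) * (w $ i * cnj (w $ i)))"
    by (rule sum.swap)
  also have "\<dots> = (\<Sum>w\<in>F. complex_of_real (c w) * cinner w w)"
    by (simp add: cinner_def sum_distrib_left mult_ac)
  finally show ?thesis .
qed

lemma trace_norm_diag_op:
  assumes o: "orthonormal_set F" and f: "finite F"
  shows "trace_norm (diag_op F lam) = (\<Sum>w\<in>F. \<bar>lam w\<bar>)"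
proof -
  define S where "S = diag_op F (\<lambda>w. \<bar>lam w\<bar>)"
  have "psd S"
    using quad_form_diag_op[of F "\<lambda>w. \<bar>lam w\<bar>"]
    by (simp add: psd_def S_def adj_diag_op quad_form_def sum_nonneg)
  moreover have "S ** S = adj (diag_op F lam) ** diag_op F lam"
    unfolding S_def adj_diag_op diag_op_mult[OF o f] by (simp add: abs_mult_self_eq)
  ultimately have "(THE S'. psd S' \<and> S' ** S' = adj (diag_op F lam) ** diag_op F lam) = S"
    by (intro the_equality) (auto intro: psd_sqrt_unique)
  then have "trace_norm (diag_op F lam) = Re (trace S)" by (simp add: trace_norm_def)
  also have "\<dots> = (\<Sum>w\<in>F. \<bar>lam w\<bar>)"
    using o by (simp add: S_def trace_diag_op Re_sum orthonormal_set_def)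
  finally show ?thesis .
qed

text \<open>Bessel's inequality, via the orthogonal projection \<open>P = \<Sum> ww\<^sup>*\<close>: \<open>0 \<le> \<parallel>u - P u\<parallel>\<^sup>2 = \<parallel>u\<parallel>\<^sup>2 - \<langle>u, P u\<rangle>\<close>.\<close>
lemma bessel_inequality:
  assumes o: "orthonormal_set F" and f: "finite F"
  shows "(\<Sum>w\<in>F. (cmod (cinner w u))\<^sup>2) \<le> (norm u)\<^sup>2"
proof -
  define P where "P = diag_op F (\<lambda>_. 1)"
  define p where "p = P *v u"
  have "cinner p p = cinner (adj P *v u) (P *v u)" by (simp add: p_def P_def adj_diag_op)
  also have "\<dots> = cinner u (P *v (P *v u))" by (rule cinner_adj[symmetric])
  also have "\<dots> = cinner u p"
    by (simp add: matrix_vector_mul_assoc P_def diag_op_mult[OF o f] p_def)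
  finally have pp: "cinner p p = cinner u p" .
  have pu: "Re (cinner p u) = Re (cinner u p)"
    using arg_cong[OF cnj_cinner[of u p], of Re] by simp
  have "0 \<le> Re (cinner (u - p) (u - p))" by (simp add: cinner_self)
  also have "\<dots> = Re (cinner u u) - Re (cinner u p)"
    by (simp add: cinner_diff_left cinner_diff_right pp pu)
  also have "\<dots> = (norm u)\<^sup>2 - (\<Sum>w\<in>F. (cmod (cinner w u))\<^sup>2)"
    using quad_form_diag_op[of F "\<lambda>_. 1" u]
    by (simp add: cinner_self p_def P_def quad_form_def)
  finally show ?thesis by simp
qed

lemma L2_set_cinner_le_norm:
  assumes "orthonormal_set F" "finite F"
  shows "L2_set (\<lambda>w. cmod (cinner w u)) F \<le> norm u"
  using real_sqrt_le_mono[OF bessel_inequality[OF assms]] by (simp add: L2_set_def)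

definition sym_outer_sum ::
    "'k set \<Rightarrow> ('k \<Rightarrow> complex^'n) \<Rightarrow> ('k \<Rightarrow> complex^'n) \<Rightarrow> complex^'n^'n" where
  "sym_outer_sum K a b = (\<Sum>k\<in>K. outer (a k) (b k) + outer (b k) (a k))"

lemma adj_sym_outer_sum: "adj (sym_outer_sum K a b) = sym_outer_sum K a b"
  by (simp add: sym_outer_sum_def adj_sum adj_add adj_outer add.commute)

lemma cinner_sym_outer_sum: "cinner w (sym_outer_sum K a b *v w) =
    (\<Sum>k\<in>K. cinner w (a k) * cinner (b k) w + cinner w (b k) * cinner (a k) w)"
  by (simp add: sym_outer_sum_def sum_matrix_vector_mult matrix_vector_mult_add_rdistrib
      outer_matrix_vector_mult cinner_sum_right cinner_add_right cinner_scale_right mult.commute)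

text \<open>In an eigenbasis \<open>F\<close>, \<open>\<bar>\<lambda>\<^sub>w\<bar> \<le> \<Sum>\<^sub>k 2 \<bar>\<langle>w, a\<^sub>k\<rangle>\<bar> \<bar>\<langle>w, b\<^sub>k\<rangle>\<bar>\<close>; summing over \<open>w\<close>, Cauchy-Schwarz and
  Bessel bound the inner sums by \<open>\<parallel>a\<^sub>k\<parallel> \<parallel>b\<^sub>k\<parallel>\<close>.\<close>
lemma trace_norm_sym_outer_sum_le:
  fixes a b :: "'k \<Rightarrow> complex^'n"
  shows "trace_norm (sym_outer_sum K a b) \<le> (\<Sum>k\<in>K. 2 * norm (a k) * norm (b k))"
proof -
  obtain F lam where f: "finite F" and o: "orthonormal_set F"
    and D: "sym_outer_sum K a b = diag_op F lam"
    using hermitian_spectral_decomposition[OF adj_sym_outer_sum] by blast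
  define \<alpha> where "\<alpha> k w = cmod (cinner w (a k))" for k w
  define \<beta> where "\<beta> k w = cmod (cinner w (b k))" for k w
  have eigenvalue: "\<bar>lam w\<bar> \<le> (\<Sum>k\<in>K. 2 * (\<alpha> k w * \<beta> k w))" if w: "w \<in> F" for w
  proof -
    have "cinner w (sym_outer_sum K a b *v w) = complex_of_real (lam w)"
      using o w by (simp add: D diag_op_eigenvector[OF o f] cinner_scaleR_right orthonormal_set_def)
    then have "\<bar>lam w\<bar>
        = cmod (\<Sum>k\<in>K. cinner w (a k) * cinner (b k) w + cinner w (b k) * cinner (a k) w)"
      by (simp add: cinner_sym_outer_sum[symmetric])
    also have "\<dots> \<le> (\<Sum>k\<in>K. cmod (cinner w (a k) * cinner (b k) w + cinner w (b k) * cinner (a k) w))"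
      by (rule norm_sum)
    also have "\<dots> \<le> (\<Sum>k\<in>K. cmod (cinner w (a k) * cinner (b k) w)
                           + cmod (cinner w (b k) * cinner (a k) w))"
      by (intro sum_mono norm_triangle_ineq)
    also have "\<dots> = (\<Sum>k\<in>K. 2 * (\<alpha> k w * \<beta> k w))"
      by (simp add: norm_mult \<alpha>_def \<beta>_def cmod_cinner_commute[of _ w])
    finally show ?thesis .
  qed
  have "trace_norm (sym_outer_sum K a b) = (\<Sum>w\<in>F. \<bar>lam w\<bar>)"
    by (simp add: D trace_norm_diag_op[OF o f])
  also have "\<dots> \<le> (\<Sum>w\<in>F. \<Sum>k\<in>K. 2 * (\<alpha> k w * \<beta> k w))"
    by (rule sum_mono[OF eigenvalue])
  also have "\<dots> = (\<Sum>k\<in>K. 2 * (\<Sum>w\<in>F. \<bar>\<alpha> k w\<bar> * \<bar>\<beta> k w\<bar>))"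
    by (subst sum.swap) (simp add: sum_distrib_left \<alpha>_def \<beta>_def)
  also have "\<dots> \<le> (\<Sum>k\<in>K. 2 * norm (a k) * norm (b k))"
  proof (rule sum_mono)
    fix k
    have "(\<Sum>w\<in>F. \<bar>\<alpha> k w\<bar> * \<bar>\<beta> k w\<bar>) \<le> L2_set (\<alpha> k) F * L2_set (\<beta> k) F"
      by (rule L2_set_mult_ineq)
    also have "\<dots> \<le> norm (a k) * norm (b k)"
      unfolding \<alpha>_def \<beta>_def
      by (intro mult_mono L2_set_cinner_le_norm[OF o f]) (simp_all add: L2_set_nonneg)
    finally show "2 * (\<Sum>w\<in>F. \<bar>\<alpha> k w\<bar> * \<bar>\<beta> k w\<bar>) \<le> 2 * norm (a k) * norm (b k)" by simp
  qed
  finally show ?thesis .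
qed


section \<open>Tensor products and the classical-quantum reduction\<close>

lemma ket_nth: "ket a $ j = (if j = a then 1 else 0)"
  by (simp add: ket_def)

lemma tensv_nth: "tensv u v $ (p, r) = u $ p * v $ r"
  by (simp add: tensv_def)

lemma sum_UNIV_pair:
  "(\<Sum>k\<in>(UNIV :: ('a::finite \<times> 'b::finite) set). f k) = (\<Sum>p\<in>UNIV. \<Sum>q\<in>UNIV. f (p, q))"
  by (simp add: UNIV_Times_UNIV[symmetric] sum.cartesian_product del: UNIV_Times_UNIV)

lemma kron_mult_tensv: "kron A B *v tensv u z = tensv (A *v u) (B *v z)"
proof -
  have "(kron A B *v tensv u z) $ (r1, r2) = tensv (A *v u) (B *v z) $ (r1, r2)" for r1 r2
  proof -
    have "(kron A B *v tensv u z) $ (r1, r2)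
        = (\<Sum>p\<in>UNIV. \<Sum>q\<in>UNIV. (A $ r1 $ p * u $ p) * (B $ r2 $ q * z $ q))"
      by (simp add: matrix_vector_mult_def kron_def tensv_nth sum_UNIV_pair mult_ac)
    also have "\<dots> = (\<Sum>p\<in>UNIV. A $ r1 $ p * u $ p) * (\<Sum>q\<in>UNIV. B $ r2 $ q * z $ q)"
      by (simp add: sum_product)
    finally show ?thesis by (simp add: tensv_nth matrix_vector_mult_def)
  qed
  then show ?thesis by (simp add: vec_eq_iff split_paired_All)
qed

lemma tensv_add_right: "tensv u (v + w) = tensv u v + tensv u w"
  by (simp add: vec_eq_iff split_paired_All tensv_nth distrib_left)

lemma cinner_tensv: "cinner (tensv u v) (tensv u' v') = cinner u u' * cinner v v'"
  by (simp add: cinner_def tensv_nth sum_UNIV_pair sum_product mult_ac)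

lemma norm_tensv_ket: "norm (tensv (ket p) z) = norm z"
proof -
  have "cinner (ket p) (ket p) = 1"
    by (simp add: cinner_def ket_nth if_distrib if_distribR cong: if_cong)
  then have "complex_of_real ((norm (tensv (ket p) z))\<^sup>2) = complex_of_real ((norm z)\<^sup>2)"
    by (simp only: cinner_self[symmetric] cinner_tensv mult_1)
  then have "(norm (tensv (ket p) z))\<^sup>2 = (norm z)\<^sup>2" by (simp only: of_real_eq_iff)
  then show ?thesis by (simp add: power2_eq_iff_nonneg)
qed

definition slice :: "complex^('a::finite \<times> 'b::finite \<times> 'e::finite) \<Rightarrow> 'a \<Rightarrow> 'b \<Rightarrow> complex^'e" where
  "slice x p q = (\<chi> i. x $ (p, q, i))"

lemma slice_add: "slice (x + y) p q = slice x p q + slice y p q"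
  by (simp add: slice_def vec_eq_iff)

lemma slice_scale: "slice (c *s x) p q = c *s slice x p q"
  by (simp add: slice_def vec_eq_iff)

lemma slice_tensv_ket:
  "slice (tensv (ket p') (tensv (ket q') z)) p q = (if p = p' \<and> q = q' then z else 0)"
  by (simp add: slice_def vec_eq_iff tensv_nth ket_nth)

lemma slice_two_qubit_branches:
  fixes p q :: 2
  shows "slice (c *s tensv (ket 0) (tensv (ket 0) u0 + tensv (ket 1) u1)
              + d *s tensv (ket 1) (tensv (ket 0) v0 + tensv (ket 1) v1)) p q
       = (if p = 0 then c *s (if q = 0 then u0 else u1) else d *s (if q = 0 then v0 else v1))"
  using exhaust_2[of p] exhaust_2[of q]
  by (auto simp: tensv_add_right slice_add slice_scale slice_tensv_ket)

lemma cqA1E_entry: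
  fixes \<rho> :: "complex^('a::finite \<times> 'b::finite \<times> 'e::finite)^('a \<times> 'b \<times> 'e)"
  shows "cqA1E \<rho> $ (a1, i) $ (a2, j)
       = (if a1 = a2 then (\<Sum>b\<in>UNIV. \<rho> $ (a1, b, i) $ (a1, b, j)) else 0)"
proof -
  have proj: "(kron (outer (ket a) (ket a)) (mat 1 :: complex^('b \<times> 'e)^('b \<times> 'e)) ** \<rho>) $ r $ c
      = (if fst r = a then \<rho> $ r $ c else 0)" for a r c
  proof -
    have "kron (outer (ket a) (ket a)) (mat 1 :: complex^('b \<times> 'e)^('b \<times> 'e)) $ r $ k
        = (if k = r \<and> fst r = a then 1 else 0)" for k
      by (cases r, cases k) (auto simp: kron_def outer_def ket_nth mat_def)
    then have "(kron (outer (ket a) (ket a)) (mat 1 :: complex^('b \<times> 'e)^('b \<times> 'e)) ** \<rho>) $ r $ c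
        = (\<Sum>k\<in>UNIV. (if k = r \<and> fst r = a then 1 else 0) * \<rho> $ k $ c)"
      by (simp add: matrix_matrix_mult_def)
    also have "\<dots> = (\<Sum>k\<in>UNIV. if k = r then (if fst r = a then \<rho> $ k $ c else 0) else 0)"
      by (intro sum.cong) auto
    finally show ?thesis by simp
  qed
  have trace: "ptrace12 (kron (outer (ket a) (ket a)) (mat 1 :: complex^('b \<times> 'e)^('b \<times> 'e)) ** \<rho>) $ i $ j
      = (\<Sum>b\<in>UNIV. \<rho> $ (a, b, i) $ (a, b, j))" for a
  proof -
    have "ptrace12 (kron (outer (ket a) (ket a)) (mat 1 :: complex^('b \<times> 'e)^('b \<times> 'e)) ** \<rho>) $ i $ j
        = (\<Sum>a'\<in>UNIV. if a' = a then (\<Sum>b\<in>UNIV. \<rho> $ (a', b, i) $ (a', b, j)) else 0)"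
      unfolding ptrace12_def vec_lambda_beta proj fst_conv by (intro sum.cong refl) simp
    then show ?thesis by simp
  qed
  have "kron (outer (ket a) (ket a)) M $ (a1, i) $ (a2, j)
      = (if a = a1 then (if a2 = a1 then M $ i $ j else 0) else 0)" for a and M :: "complex^'e^'e"
    by (simp add: kron_def outer_def ket_nth)
  then have "cqA1E \<rho> $ (a1, i) $ (a2, j)
      = (\<Sum>a\<in>UNIV. if a = a1 then (if a2 = a1 then (\<Sum>b\<in>UNIV. \<rho> $ (a1, b, i) $ (a1, b, j)) else 0) else 0)"
    unfolding cqA1E_def sum_component by (intro sum.cong refl) (simp add: trace)
  then show ?thesis by auto
qed

lemma cqA1E_add: "cqA1E (A + B) = cqA1E A + cqA1E B"
  by (simp add: vec_eq_iff cqA1E_entry split_paired_All sum.distrib)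

lemma cqA1E_diff: "cqA1E (A - B) = cqA1E A - cqA1E B"
  by (simp add: vec_eq_iff cqA1E_entry split_paired_All sum_subtractf)

lemma cqA1E_scaleR: "cqA1E (r *\<^sub>R A) = r *\<^sub>R cqA1E A"
  by (simp add: vec_eq_iff cqA1E_entry split_paired_All scaleR_sum_right)

lemma cqA1E_outer_sym:
  fixes x y :: "complex^('a::finite \<times> 'b::finite \<times> 'e::finite)"
  shows "cqA1E (outer x y + outer y x) =
    sym_outer_sum UNIV (\<lambda>(p, q). tensv (ket p) (slice x p q)) (\<lambda>(p, q). tensv (ket p) (slice y p q))"
proof -
  have "cqA1E (outer x y + outer y x) $ (a1, i) $ (a2, j) =
    sym_outer_sum UNIV (\<lambda>(p, q). tensv (ket p) (slice x p q))
      (\<lambda>(p, q). tensv (ket p) (slice y p q)) $ (a1, i) $ (a2, j)" for a1 i a2 j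
  proof -
    define g where "g p = (\<Sum>q\<in>UNIV. x $ (p, q, i) * cnj (y $ (p, q, j))
                                     + y $ (p, q, i) * cnj (x $ (p, q, j)))" for p
    have "sym_outer_sum UNIV (\<lambda>(p, q). tensv (ket p) (slice x p q))
        (\<lambda>(p, q). tensv (ket p) (slice y p q)) $ (a1, i) $ (a2, j)
       = (\<Sum>p\<in>UNIV. if p = a1 then (if a2 = a1 then g p else 0) else 0)"
      unfolding sym_outer_sum_def sum_component sum_UNIV_pair g_def
      by (intro sum.cong refl) (auto simp: outer_nth tensv_nth ket_nth slice_def)
    also have "\<dots> = (if a1 = a2 then g a1 else 0)" by auto
    also have "\<dots> = cqA1E (outer x y + outer y x) $ (a1, i) $ (a2, j)"
      by (simp add: cqA1E_entry g_def outer_nth sum.distrib)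
    finally show ?thesis by simp
  qed
  then show ?thesis by (simp add: vec_eq_iff split_paired_All)
qed


section \<open>Bell states\<close>

lemma sandwich_Bell:
  fixes W :: "complex^'i^'m"
  shows "W ** outer (complex_of_real (1 / sqrt 2) *s (u + v)) (complex_of_real (1 / sqrt 2) *s (u + v))
           ** adj W = (1/2 :: real) *\<^sub>R outer (W *v u + W *v v) (W *v u + W *v v)"
    and "W ** outer (complex_of_real (1 / sqrt 2) *s (u - v)) (complex_of_real (1 / sqrt 2) *s (u - v))
           ** adj W = (1/2 :: real) *\<^sub>R outer (W *v u - W *v v) (W *v u - W *v v)"
proof -
  have half: "1 / sqrt 2 * (1 / sqrt 2) = (1/2 :: real)" by simp
  show "W ** outer (complex_of_real (1 / sqrt 2) *s (u + v)) (complex_of_real (1 / sqrt 2) *s (u + v))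
          ** adj W = (1/2 :: real) *\<^sub>R outer (W *v u + W *v v) (W *v u + W *v v)"
    by (simp only: sandwich_outer)
      (simp only: vector_scalar_commute outer_of_real_scale half matrix_vector_right_distrib)
  show "W ** outer (complex_of_real (1 / sqrt 2) *s (u - v)) (complex_of_real (1 / sqrt 2) *s (u - v))
          ** adj W = (1/2 :: real) *\<^sub>R outer (W *v u - W *v v) (W *v u - W *v v)"
    by (simp only: sandwich_outer)
      (simp only: vector_scalar_commute outer_of_real_scale half matrix_vector_mult_diff_distrib)
qed

lemma cqA1E_Bell_mixture:
  fixes W :: "complex^'i^('a::finite \<times> 'b::finite \<times> 'e::finite)"
  shows "cqA1E ((1/2 :: real) *\<^sub>R (W ** (outer u u + outer v v) ** adj W))
    = (1/2 :: real) *\<^sub>R cqA1E (W ** outer (complex_of_real (1 / sqrt 2) *s (u + v))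
                                      (complex_of_real (1 / sqrt 2) *s (u + v)) ** adj W)
    + (1/2 :: real) *\<^sub>R cqA1E (W ** outer (complex_of_real (1 / sqrt 2) *s (u - v))
                                      (complex_of_real (1 / sqrt 2) *s (u - v)) ** adj W)"
proof -
  have "(1/2 :: real) *\<^sub>R (outer (W *v u) (W *v u) + outer (W *v v) (W *v v))
      = (1/2 :: real) *\<^sub>R ((1/2 :: real) *\<^sub>R outer (W *v u + W *v v) (W *v u + W *v v))
      + (1/2 :: real) *\<^sub>R ((1/2 :: real) *\<^sub>R outer (W *v u - W *v v) (W *v u - W *v v))"
    by (simp add: outer_add_left outer_add_right outer_diff_left outer_diff_right vec_eq_iff
        scaleR_complex algebra_simps)
  moreover have "W ** (outer u u + outer v v) ** adj W = outer (W *v u) (W *v u) + outer (W *v v) (W *v v)"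
    by (simp only: matrix_add_ldistrib matrix_add_rdistrib sandwich_outer)
  ultimately show ?thesis
    unfolding sandwich_Bell by (simp only: cqA1E_scaleR[symmetric] cqA1E_add[symmetric])
qed

lemma cqA1E_Bell_difference:
  fixes W :: "complex^'i^('a::finite \<times> 'b::finite \<times> 'e::finite)"
  shows "cqA1E (W ** outer (complex_of_real (1 / sqrt 2) *s (u + v))
                          (complex_of_real (1 / sqrt 2) *s (u + v)) ** adj W)
       - cqA1E (W ** outer (complex_of_real (1 / sqrt 2) *s (u - v))
                          (complex_of_real (1 / sqrt 2) *s (u - v)) ** adj W)
    = sym_outer_sum UNIV (\<lambda>(p, q). tensv (ket p) (slice (W *v u) p q))
                         (\<lambda>(p, q). tensv (ket p) (slice (W *v v) p q))"
proof -
  have "(1/2 :: real) *\<^sub>R outer (W *v u + W *v v) (W *v u + W *v v)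
      - (1/2 :: real) *\<^sub>R outer (W *v u - W *v v) (W *v u - W *v v)
      = outer (W *v u) (W *v v) + outer (W *v v) (W *v u)"
    by (simp add: outer_add_left outer_add_right outer_diff_left outer_diff_right vec_eq_iff
        scaleR_complex algebra_simps)
  then show ?thesis
    unfolding sandwich_Bell by (simp only: cqA1E_diff[symmetric] cqA1E_outer_sym[symmetric])
qed

lemma trace_norm_cqA1E_Bell_difference_le:
  fixes W :: "complex^'i^('a::finite \<times> 'b::finite \<times> 'e::finite)"
  shows "trace_norm
      (cqA1E (W ** outer (complex_of_real (1 / sqrt 2) *s (u + v))
                        (complex_of_real (1 / sqrt 2) *s (u + v)) ** adj W)
     - cqA1E (W ** outer (complex_of_real (1 / sqrt 2) *s (u - v))
                        (complex_of_real (1 / sqrt 2) *s (u - v)) ** adj W))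
    \<le> (\<Sum>(p, q)\<in>UNIV. 2 * norm (slice (W *v u) p q) * norm (slice (W *v v) p q))"
proof -
  let ?a = "\<lambda>(p, q). tensv (ket p) (slice (W *v u) p q)"
  let ?b = "\<lambda>(p, q). tensv (ket p) (slice (W *v v) p q)"
  have "trace_norm (sym_outer_sum UNIV ?a ?b) \<le> (\<Sum>k\<in>UNIV. 2 * norm (?a k) * norm (?b k))"
    by (rule trace_norm_sym_outer_sum_le)
  also have "\<dots> = (\<Sum>(p, q)\<in>UNIV. 2 * norm (slice (W *v u) p q) * norm (slice (W *v v) p q))"
    by (intro sum.cong refl) (auto simp: norm_tensv_ket)
  finally show ?thesis unfolding cqA1E_Bell_difference .
qed


theorem mainTheorem6:
  fixes Q :: real and \<eta> :: complex
    and k0E k1E e0 e1 e2 e3 f0 f1 f2 f3 :: "complex^'e::finite"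
    and Rw :: "complex^(2 \<times> 2)^(2 \<times> 2 \<times> 'e)"
    and V :: "complex^(2 \<times> 'e)^(2 \<times> 'e)"
    and e f :: "complex^'e"
  assumes Q: "0 \<le> Q" "Q \<le> 1"
    and eta: "cmod \<eta> \<le> 1"
    and onE: "norm k0E = 1" "norm k1E = 1" "cinner k0E k1E = 0"
    and e_def: "e = \<eta> *s k0E + complex_of_real (sqrt (1 - (cmod \<eta>)\<^sup>2)) *s k1E"
    and f_def: "f = (- cnj \<eta>) *s k0E + complex_of_real (sqrt (1 - (cmod \<eta>)\<^sup>2)) *s k1E"
    and Rw00: "Rw *v ket (0, 0) =
        complex_of_real (sqrt (1 - Q)) *s tensv (ket 0) (tensv (ket 0) k0E)
      + complex_of_real (sqrt Q) *s tensv (ket 1) (tensv (ket 0) f)"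
    and Rw11: "Rw *v ket (1, 1) =
        complex_of_real (sqrt Q) *s tensv (ket 0) (tensv (ket 1) e)
      + complex_of_real (sqrt (1 - Q)) *s tensv (ket 1) (tensv (ket 1) k0E)"
    and V_unitary: "unitary_mat V"
    and V1: "V *v tensv (ket 0) k0E = tensv (ket 0) e0 + tensv (ket 1) e1"
    and V2: "V *v tensv (ket 1) k0E = tensv (ket 0) e2 + tensv (ket 1) e3"
    and V3: "V *v tensv (ket 0) f = tensv (ket 0) f0 + tensv (ket 1) f1"
    and V4: "V *v tensv (ket 1) e = tensv (ket 0) f2 + tensv (ket 1) f3"
    and norms1: "(norm e0)\<^sup>2 = 1 - Q" "(norm e3)\<^sup>2 = 1 - Q" "(norm f0)\<^sup>2 = 1 - Q" "(norm f3)\<^sup>2 = 1 - Q"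
    and norms2: "(norm e1)\<^sup>2 = Q" "(norm e2)\<^sup>2 = Q" "(norm f1)\<^sup>2 = Q" "(norm f2)\<^sup>2 = Q"
  shows "let W = kron (mat 1 :: complex^2^2) V ** Rw;
             phiP = complex_of_real (1 / sqrt 2) *s (ket (0, 0) + ket (1, 1));
             phiM = complex_of_real (1 / sqrt 2) *s (ket (0, 0) - ket (1, 1));
             \<tau> = W ** outer phiP phiP ** adj W;
             \<mu> = W ** outer phiM phiM ** adj W;
             \<sigma> = (1/2 :: real) *\<^sub>R (W ** (outer (ket (0, 0)) (ket (0, 0)) + outer (ket (1, 1)) (ket (1, 1))) ** adj W)
         in cqA1E \<sigma> = (1/2 :: real) *\<^sub>R cqA1E \<tau> + (1/2 :: real) *\<^sub>R cqA1E \<mu>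
            \<and> (1/2) * trace_norm (cqA1E \<tau> - cqA1E \<mu>) \<le> 4 * Q * (1 - Q)"
proof -
  define W where "W = kron (mat 1 :: complex^2^2) V ** Rw"
  have W_apply: "W *v v = kron (mat 1 :: complex^2^2) V *v (Rw *v v)" for v
    by (simp add: W_def matrix_vector_mul_assoc)
  have x: "W *v ket (0, 0) =
      complex_of_real (sqrt (1 - Q)) *s tensv (ket 0) (tensv (ket 0) e0 + tensv (ket 1) e1)
    + complex_of_real (sqrt Q) *s tensv (ket 1) (tensv (ket 0) f0 + tensv (ket 1) f1)"
    unfolding W_apply Rw00 matrix_vector_right_distrib vector_scalar_commute kron_mult_tensv
      matrix_vector_mul_lid V1 V3 ..
  have y: "W *v ket (1, 1) =
      complex_of_real (sqrt Q) *s tensv (ket 0) (tensv (ket 0) f2 + tensv (ket 1) f3)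
    + complex_of_real (sqrt (1 - Q)) *s tensv (ket 1) (tensv (ket 0) e2 + tensv (ket 1) e3)"
    unfolding W_apply Rw11 matrix_vector_right_distrib vector_scalar_commute kron_mult_tensv
      matrix_vector_mul_lid V2 V4 ..
  have sqrt_norm: "norm z = sqrt c" if "(norm z)\<^sup>2 = c" for z :: "complex^'e" and c
    using that by auto
  have norms: "norm e0 = sqrt (1 - Q)" "norm e3 = sqrt (1 - Q)" "norm f0 = sqrt (1 - Q)"
    "norm f3 = sqrt (1 - Q)" "norm e1 = sqrt Q" "norm e2 = sqrt Q" "norm f1 = sqrt Q"
    "norm f2 = sqrt Q"
    by (intro sqrt_norm norms1 norms2)+
  have slice_products:
    "norm (slice (W *v ket (0, 0)) p q) * norm (slice (W *v ket (1, 1)) p q) = Q * (1 - Q)" for p q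
  proof -
    have "sqrt Q * sqrt (1 - Q) = sqrt (Q * (1 - Q))" "sqrt (1 - Q) * sqrt Q = sqrt (Q * (1 - Q))"
      by (simp_all add: real_sqrt_mult mult.commute)
    moreover have "Q * (1 - Q) \<ge> 0" using Q by simp
    ultimately show ?thesis
      using Q norms by (simp add: x y slice_two_qubit_branches norm_of_real_smult)
  qed
  have "(\<Sum>(p, q)\<in>UNIV. 2 * norm (slice (W *v ket (0, 0)) p q) * norm (slice (W *v ket (1, 1)) p q))
      = 8 * Q * (1 - Q)"
    by (simp add: mult.assoc slice_products)
  then show ?thesis
    unfolding Let_def W_def[symmetric]
    using trace_norm_cqA1E_Bell_difference_le[of W "ket (0, 0)" "ket (1, 1)"]
    by (intro conjI cqA1E_Bell_mixture) linarith
qed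

end
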